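(* Let $\mathbf t:\mathcal D\to\mathcal T$ be a refinement system. For every $Q\sqsubset B$, the presheaf $Q^{+}$ on $B^{+}$ is representable, represented by the object $(Q,\mathrm{id}_B)\in B^{+}$: there is a natural isomorphism $Q^{+}\cong B^{+}(-,(Q,\mathrm{id}_B))$. Moreover, under these isomorphisms and the Yoneda lemma, for every derivation $\alpha$ of $P\Rightarrow_cQ$ (with $c:A\to B$, $P\sqsubset A$), the natural transformation $\theta_\alpha:P^{+}\Rightarrow Q^{+}\circ(c^{+})^{op}$ corresponds to the morphism $c^{+}(P,\mathrm{id}_A)=(P,c)\to(Q,\mathrm{id}_B)$ of $B^{+}$ given by $\alpha$; that is, the positive representation $\mathbf t\to\mathbf{upc}$ factors as the morphism $\mathbf t\to\mathbf{obc}$ sending $B\mapsto B^{+}$ and $Q\mapsto(B^{+},(Q,\mathrm{id}_B))$, followed by the Yoneda embedding $\mathbf{obc}\to\mathbf{upc}$, $(\mathcal A,a)\mapsto(\mathcal A,\mathcal A(-,a))$.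
   Context: A refinement system is a functor $\mathbf{t}:\mathcal{D}\to\mathcal{T}$; composition is diagrammatic. Write $P\sqsubset A$ if $\mathbf t(P)=A$; a derivation of $P\Rightarrow_cQ$ is a morphism $\alpha:P\to Q$ with $\mathbf t(\alpha)=c$. For $B\in\mathcal T$, $B^{+}$ is the category with objects $(P,c)$, $P\sqsubset A$, $c:A\to B$, and morphisms $(P_1,c_1)\to(P_2,c_2)$ the derivations of $P_1\Rightarrow_eP_2$ with $c_1=e;c_2$. For $c:A\to B$, $c^{+}:A^{+}\to B^{+}$ sends $(P,e)\mapsto(P,e;c)$, identity on derivations. For $Q\sqsubset B$, $Q^{+}:(B^{+})^{op}\to\mathbf{Set}$ sends $(P,c)$ to the set of derivations of $P\Rightarrow_cQ$, acting on a morphism $\alpha$ by $\beta\mapsto\alpha;\beta$. For a derivation $\alpha$ of $P\Rightarrow_cQ$, $\theta_\alpha$ has component at $(P',e)$ given by $\beta\mapsto\beta;\alpha$. $\mathbf{upc}:\mathbf{Psh}\to\mathbf{Cat}$ is the forgetful functor from pairs (category, presheaf on it), with morphisms $(F,\theta:\phi\Rightarrow\psi\circ F^{op})$. $\mathbf{obc}:\mathbf{Cat}_\bullet\to\mathbf{Cat}$ is the forgetful functor from the category of pointed categories $(\mathcal A,a)$, whose morphisms $(\mathcal A,a)\to(\mathcal B,b)$ are pairs $(F,h)$ with $F:\mathcal A\to\mathcal B$ a functor and $h:Fa\to b$ in $\mathcal B$; the Yoneda embedding sends $(F,h)$ to $(F,\theta)$ with $\theta_x:\mathcal A(x,a)\to\mathcal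 B(Fx,b)$, $g\mapsto Fg;h$. *)

theory Defs
  imports Main
begin

(* Small categories given by objects, arrows, domain, codomain, identities and
   DIAGRAMMATIC composition: cmp f g = f;g : dom f -> cod g when cod f = dom g. *)
record ('o,'m) cat =
  obj :: "'o set"
  arr :: "'m set"
  dom :: "'m \<Rightarrow> 'o"
  cod :: "'m \<Rightarrow> 'o"
  ide :: "'o \<Rightarrow> 'm"
  cmp :: "'m \<Rightarrow> 'm \<Rightarrow> 'm"

definition category :: "('o,'m) cat \<Rightarrow> bool" where
  "category C \<longleftrightarrow>
     (\<forall>x\<in>obj C. ide C x \<in> arr C \<and> dom C (ide C x) = x \<and> cod C (ide C x) = x) \<and>
     (\<forall>f\<in>arr C. dom C f \<in> obj C \<and> cod C f \<in> obj C) \<and>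
     (\<forall>f\<in>arr C. \<forall>g\<in>arr C. cod C f = dom C g \<longrightarrow>
        cmp C f g \<in> arr C \<and> dom C (cmp C f g) = dom C f \<and> cod C (cmp C f g) = cod C g) \<and>
     (\<forall>f\<in>arr C. cmp C (ide C (dom C f)) f = f \<and> cmp C f (ide C (cod C f)) = f) \<and>
     (\<forall>f\<in>arr C. \<forall>g\<in>arr C. \<forall>h\<in>arr C. cod C f = dom C g \<longrightarrow> cod C g = dom C h \<longrightarrow>
        cmp C (cmp C f g) h = cmp C f (cmp C g h))"

definition "functor" :: "('o,'m) cat \<Rightarrow> ('p,'n) cat \<Rightarrow> ('o \<Rightarrow> 'p) \<Rightarrow> ('m \<Rightarrow> 'n) \<Rightarrow> bool" where
  "functor C D FO FM \<longleftrightarrow>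
     (\<forall>x\<in>obj C. FO x \<in> obj D \<and> FM (ide C x) = ide D (FO x)) \<and>
     (\<forall>f\<in>arr C. FM f \<in> arr D \<and> dom D (FM f) = FO (dom C f) \<and> cod D (FM f) = FO (cod C f)) \<and>
     (\<forall>f\<in>arr C. \<forall>g\<in>arr C. cod C f = dom C g \<longrightarrow> FM (cmp C f g) = cmp D (FM f) (FM g))"

definition refinement_system ::
  "('p,'a) cat \<Rightarrow> ('o,'b) cat \<Rightarrow> ('p \<Rightarrow> 'o) \<Rightarrow> ('a \<Rightarrow> 'b) \<Rightarrow> bool" where
  "refinement_system D T tO tM \<longleftrightarrow> category D \<and> category T \<and> functor D T tO tM"

definition deriv ::
  "('p,'a) cat \<Rightarrow> ('a \<Rightarrow> 'b) \<Rightarrow> 'p \<Rightarrow> 'b \<Rightarrow> 'p \<Rightarrow> 'a \<Rightarrow> bool" where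
  "deriv D tM P c Q \<alpha> \<longleftrightarrow> \<alpha> \<in> arr D \<and> dom D \<alpha> = P \<and> cod D \<alpha> = Q \<and> tM \<alpha> = c"

definition plus_obj ::
  "('p,'a) cat \<Rightarrow> ('o,'b) cat \<Rightarrow> ('p \<Rightarrow> 'o) \<Rightarrow> 'o \<Rightarrow> ('p \<times> 'b) set" where
  "plus_obj D T tO B = {(P,c). P \<in> obj D \<and> c \<in> arr T \<and> dom T c = tO P \<and> cod T c = B}"

(* Hom-sets of B^+ : B^+((P1,c1),(P2,c2)) = derivations of P1 ==>_e P2 with c1 = e;c2.
   Composition in B^+ is composition in D, identities are those of D. *)
definition plus_hom ::
  "('p,'a) cat \<Rightarrow> ('o,'b) cat \<Rightarrow> ('a \<Rightarrow> 'b) \<Rightarrow> ('p \<times> 'b) \<Rightarrow> ('p \<times> 'b) \<Rightarrow> 'a set" where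
  "plus_hom D T tM x y = {\<alpha>. deriv D tM (fst x) (tM \<alpha>) (fst y) \<alpha> \<and> snd x = cmp T (tM \<alpha>) (snd y)}"

(* The presheaf Q^+ on B^+ at object (P,c): derivations of P ==>_c Q.
   Its action on a morphism f is beta |-> f;beta (composition in D). *)
definition Qplus :: "('p,'a) cat \<Rightarrow> ('a \<Rightarrow> 'b) \<Rightarrow> 'p \<Rightarrow> ('p \<times> 'b) \<Rightarrow> 'a set" where
  "Qplus D tM Q x = {\<beta>. deriv D tM (fst x) (snd x) Q \<beta>}"

(* c^+ on objects: (P,e) |-> (P, e;c); on morphisms it is the identity. *)
definition cplus_obj :: "('o,'b) cat \<Rightarrow> 'b \<Rightarrow> ('p \<times> 'b) \<Rightarrow> ('p \<times> 'b)" where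
  "cplus_obj T c x = (fst x, cmp T (snd x) c)"

definition nat_iso_rep ::
  "('p,'a) cat \<Rightarrow> ('o,'b) cat \<Rightarrow> ('p \<Rightarrow> 'o) \<Rightarrow> ('a \<Rightarrow> 'b) \<Rightarrow> 'p
    \<Rightarrow> (('p \<times> 'b) \<Rightarrow> 'a \<Rightarrow> 'a) \<Rightarrow> bool" where
  "nat_iso_rep D T tO tM Q \<phi> \<longleftrightarrow>
     (\<forall>x\<in>plus_obj D T tO (tO Q).
        bij_betw (\<phi> x) (Qplus D tM Q x) (plus_hom D T tM x (Q, ide T (tO Q)))) \<and>
     (\<forall>x\<in>plus_obj D T tO (tO Q). \<forall>y\<in>plus_obj D T tO (tO Q).
        \<forall>f\<in>plus_hom D T tM x y. \<forall>\<beta>\<in>Qplus D tM Q y.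
          \<phi> x (cmp D f \<beta>) = cmp D f (\<phi> y \<beta>))"

end

theory Submission
  imports Defs
begin

(* A derivation beta of P ==>_c Q is literally an arrow (P, c) -> (Q, id_B) of B^+, since
   c = c;id_B.  So Q^+ and B^+(-, (Q, id_B)) coincide as presheaves, the representing
   isomorphism is the identity, and the Yoneda correspondent of theta_alpha is alpha itself,
   viewed as an arrow (P, c) -> (Q, id_B). *)

lemma category_comp_ide:
  assumes "category C" and "f \<in> arr C"
  shows "cmp C (ide C (dom C f)) f = f" and "cmp C f (ide C (cod C f)) = f"
  using assms unfolding category_def by auto

lemma functor_arrD:
  assumes "functor C D FO FM" and "f \<in> arr C"
  shows "FM f \<in> arr D" and "dom D (FM f) = FO (dom C f)" and "cod D (FM f) = FO (cod C f)"
  using assms unfolding functor_def by auto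

lemma refinement_cmp_ide_cod:
  assumes "refinement_system D T tO tM" and "\<beta> \<in> arr D"
  shows "cmp T (tM \<beta>) (ide T (tO (cod D \<beta>))) = tM \<beta>"
proof -
  have T: "category T" and t: "functor D T tO tM"
    using assms(1) unfolding refinement_system_def by auto
  show ?thesis
    using category_comp_ide(2)[OF T functor_arrD(1)[OF t assms(2)]] functor_arrD(3)[OF t assms(2)]
    by simp
qed

lemma deriv_in_plus_hom:
  assumes "refinement_system D T tO tM" and "deriv D tM P c Q \<alpha>"
  shows "\<alpha> \<in> plus_hom D T tM (P, c) (Q, ide T (tO Q))"
  using assms(2) refinement_cmp_ide_cod[OF assms(1), of \<alpha>]
  unfolding plus_hom_def deriv_def by simp

lemma Qplus_eq_plus_hom:
  assumes "refinement_system D T tO tM"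
  shows "Qplus D tM Q x = plus_hom D T tM x (Q, ide T (tO Q))"
  using refinement_cmp_ide_cod[OF assms]
  unfolding Qplus_def plus_hom_def deriv_def by (auto, metis)

lemma nat_iso_rep_id:
  assumes "refinement_system D T tO tM"
  shows "nat_iso_rep D T tO tM Q (\<lambda>x \<beta>. \<beta>)"
  unfolding nat_iso_rep_def Qplus_eq_plus_hom[OF assms] by (simp add: bij_betw_id[unfolded id_def])

lemma cplus_obj_ide:
  assumes "category T" and "c \<in> arr T" and "dom T c = A"
  shows "cplus_obj T c (P, ide T A) = (P, c)"
  using category_comp_ide(1)[OF assms(1,2)] assms(3) unfolding cplus_obj_def by simp

theorem proposition3p9:
  fixes D :: "('p,'a) cat" and T :: "('o,'b) cat"
    and tO :: "'p \<Rightarrow> 'o" and tM :: "'a \<Rightarrow> 'b"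
  assumes "refinement_system D T tO tM"
  shows "\<exists>\<phi> :: 'p \<Rightarrow> ('p \<times> 'b) \<Rightarrow> 'a \<Rightarrow> 'a.
    (\<forall>Q\<in>obj D. nat_iso_rep D T tO tM Q (\<phi> Q)) \<and>
    (\<forall>P Q c \<alpha>. P \<in> obj D \<longrightarrow> Q \<in> obj D \<longrightarrow> deriv D tM P c Q \<alpha> \<longrightarrow>
       \<alpha> \<in> plus_hom D T tM (cplus_obj T c (P, ide T (tO P))) (Q, ide T (tO Q)) \<and>
       (\<forall>x\<in>plus_obj D T tO (tO P). \<forall>\<beta>\<in>Qplus D tM P x.
          \<phi> Q (cplus_obj T c x) (cmp D \<beta> \<alpha>) = cmp D (\<phi> P x \<beta>) \<alpha>))"
proof (intro exI[of _ "\<lambda>Q x \<beta>. \<beta>"] conjI ballI allI impI)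
  fix Q show "nat_iso_rep D T tO tM Q (\<lambda>x \<beta>. \<beta>)"
    using nat_iso_rep_id[OF assms] .
next
  fix P Q c \<alpha> assume "deriv D tM P c Q \<alpha>"
  moreover have "category T" and "functor D T tO tM"
    using assms unfolding refinement_system_def by auto
  ultimately have "cplus_obj T c (P, ide T (tO P)) = (P, c)"
    using cplus_obj_ide functor_arrD unfolding deriv_def by metis
  then show "\<alpha> \<in> plus_hom D T tM (cplus_obj T c (P, ide T (tO P))) (Q, ide T (tO Q))"
    using deriv_in_plus_hom[OF assms \<open>deriv D tM P c Q \<alpha>\<close>] by simp
qed simp

end
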